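(* Let $\delta\in(0,1)$ and $0<\rho<(1-\delta)/2$, and let $G\sim G(n,p)$ with $p=n^{\delta-1}$. Then with probability at least $1-\exp(-\frac14 n^{\delta})$, for every set $S$ of $n^{\rho}$ vertices of $G$, the number of vertices having no neighbor in $S$ is at least $n-2n^{\delta+\rho}$.
   Context: $G(n,p)$ is the Erdős–Rényi random graph on $n$ vertices with edge probability $p$. *)

theory Defs
  imports "HOL-Probability.Probability"
begin

definition all_edges :: "nat \<Rightarrow> nat set set" where
  "all_edges n = {{u, v} | u v. u < n \<and> v < n \<and> u \<noteq> v}"

text \<open>Erdos-Renyi random graph G(n,p): a random graph is the indicator function of its
  edge set; each potential edge is present independently with probability p.\<close>
definition gnp :: "nat \<Rightarrow> real \<Rightarrow> (nat set \<Rightarrow> bool) pmf" where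
  "gnp n p = Pi_pmf (all_edges n) False (\<lambda>_. bernoulli_pmf p)"

definition adj :: "(nat set \<Rightarrow> bool) \<Rightarrow> nat \<Rightarrow> nat \<Rightarrow> bool" where
  "adj G u v \<longleftrightarrow> u \<noteq> v \<and> G {u, v}"

end

theory Submission imports Defs "HOL-Real_Asymp.Real_Asymp" begin

text \<open>The degree of a vertex of \<open>G(n, p)\<close> is binomially distributed with mean at most
  \<open>\<mu> = n\<^sup>\<delta>\<close>, so by an exponential-moment (Chernoff) bound it exceeds \<open>2\<mu>\<close> with probability
  at most \<open>exp (-\<mu>/3)\<close>. A union bound over the \<open>n\<close> vertices shows that, with probability at
  least \<open>1 - n exp (-\<mu>/3) \<ge> 1 - exp (-\<mu>/4)\<close> for large \<open>n\<close>, every degree is at most \<open>2\<mu>\<close>.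
  Then any \<open>n\<^sup>\<rho>\<close> vertices have at most \<open>2 n\<^sup>\<delta>\<^sup>+\<^sup>\<rho>\<close> neighbours in total.
  The argument works for every real \<open>\<rho>\<close>.\<close>

lemma binomial_pmf_power_moment:
  fixes t p :: real
  assumes "p \<in> {0..1}"
  shows "(\<Sum>j\<le>m. pmf (binomial_pmf m p) j * t ^ j) = (t * p + (1 - p)) ^ m"
proof -
  have "(\<Sum>j\<le>m. pmf (binomial_pmf m p) j * t ^ j)
      = (\<Sum>j\<le>m. of_nat (m choose j) * (t * p) ^ j * (1 - p) ^ (m - j))"
    using assms by (simp add: pmf_binomial power_mult_distrib algebra_simps)
  also have "\<dots> = (t * p + (1 - p)) ^ m"
    by (rule binomial_ring[symmetric])
  finally show ?thesis .
qed

lemma binomial_pmf_upper_tail: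
  fixes t p a :: real
  assumes p: "p \<in> {0..1}" and t: "1 \<le> t"
  shows "measure_pmf.prob (binomial_pmf m p) {j. a < real j} \<le> (t * p + (1 - p)) ^ m / t powr a"
proof -
  let ?B = "binomial_pmf m p"
  let ?T = "{j\<in>{..m}. a < real j}"
  have "measure_pmf.prob ?B {j. a < real j} = measure_pmf.prob ?B ?T"
    using p by (intro measure_prob_cong_0) (auto simp: set_pmf_binomial_eq)
  also have "\<dots> = (\<Sum>j\<in>?T. pmf ?B j)"
    by (simp add: measure_measure_pmf_finite)
  also have "\<dots> \<le> (\<Sum>j\<in>?T. pmf ?B j * (t ^ j / t powr a))"
  proof (intro sum_mono)
    fix j assume "j \<in> ?T"
    hence "t powr a \<le> t powr real j" using t by (intro powr_mono) auto
    hence "1 \<le> t ^ j / t powr a" using t by (simp add: powr_realpow)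
    thus "pmf ?B j \<le> pmf ?B j * (t ^ j / t powr a)"
      by (metis mult_left_mono mult.right_neutral pmf_nonneg)
  qed
  also have "\<dots> \<le> (\<Sum>j\<le>m. pmf ?B j * (t ^ j / t powr a))"
    using t by (intro sum_mono2) auto
  also have "\<dots> = (t * p + (1 - p)) ^ m / t powr a"
    using binomial_pmf_power_moment[OF p, of m t] by (simp only: times_divide_eq_right flip: sum_divide_distrib)
  finally show ?thesis .
qed

lemma binomial_pmf_prob_gt_twice_mean:
  fixes p \<mu> :: real
  assumes p: "p \<in> {0..1}" and mean: "real m * p \<le> \<mu>" and "0 \<le> \<mu>"
  shows "measure_pmf.prob (binomial_pmf m p) {j. 2 * \<mu> < real j} \<le> exp (- \<mu> / 3)"
proof -
  have "(2 * p + (1 - p)) ^ m = (1 + p) ^ m" by (simp add: add.commute)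
  also have "\<dots> \<le> exp p ^ m"
    using p by (intro power_mono) (auto simp: add.commute exp_ge_add_one_self)
  also have "\<dots> = exp (real m * p)" by (simp add: exp_of_nat_mult)
  finally have moment: "(2 * p + (1 - p)) ^ m \<le> exp (real m * p)" .
  have "\<mu> * (2/3) \<le> \<mu> * ln 2"
    using ln2_ge_two_thirds \<open>0 \<le> \<mu>\<close> by (intro mult_left_mono) auto
  hence "real m * p - 2 * \<mu> * ln 2 \<le> - \<mu> / 3" using mean by simp
  have "measure_pmf.prob (binomial_pmf m p) {j. 2 * \<mu> < real j}
      \<le> (2 * p + (1 - p)) ^ m / 2 powr (2 * \<mu>)"
    by (rule binomial_pmf_upper_tail[OF p]) simp
  also have "\<dots> \<le> exp (real m * p) / exp (2 * \<mu> * ln 2)"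
    using moment by (simp add: powr_def divide_right_mono)
  also have "\<dots> = exp (real m * p - 2 * \<mu> * ln 2)" by (simp add: exp_diff)
  also have "\<dots> \<le> exp (- \<mu> / 3)"
    using \<open>real m * p - 2 * \<mu> * ln 2 \<le> - \<mu> / 3\<close> by simp
  finally show ?thesis .
qed

lemma finite_all_edges: "finite (all_edges n)"
proof (rule finite_subset)
  show "all_edges n \<subseteq> Pow {..<n}" unfolding all_edges_def by auto
qed simp

lemma gnp_degree_distribution:
  assumes u: "u < n" and p: "p \<in> {0..1}"
  shows "map_pmf (\<lambda>G. card {v\<in>{..<n}. adj G u v}) (gnp n p) = binomial_pmf (n - 1) p"
proof -
  define E where "E = (\<lambda>v. {u, v}) ` ({..<n} - {u})"
  have inj: "inj_on (\<lambda>v. {u, v}) ({..<n} - {u})"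
    by (auto simp: inj_on_def doubleton_eq_iff)
  have card_E: "card E = n - 1" unfolding E_def using u inj by (simp add: card_image)
  have E_edges: "E \<subseteq> all_edges n" unfolding E_def all_edges_def using u by auto
  have degree_eq: "card {v\<in>{..<n}. adj G u v} = card {e\<in>E. G e}" for G
  proof -
    have "{e\<in>E. G e} = (\<lambda>v. {u, v}) ` {v\<in>{..<n}. adj G u v}"
      unfolding E_def adj_def by auto
    moreover have "inj_on (\<lambda>v. {u, v}) {v\<in>{..<n}. adj G u v}"
      by (rule inj_on_subset[OF inj]) (auto simp: adj_def)
    ultimately show ?thesis by (simp add: card_image)
  qed
  have "binomial_pmf (n - 1) p = map_pmf (\<lambda>f. card {e\<in>E. f e}) (Pi_pmf E False (\<lambda>_. bernoulli_pmf p))"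
    by (rule binomial_pmf_altdef') (use card_E p in \<open>auto simp: E_def\<close>)
  also have "Pi_pmf E False (\<lambda>_. bernoulli_pmf p) =
      map_pmf (\<lambda>f e. if e \<in> E then f e else False) (gnp n p)"
    unfolding gnp_def by (rule Pi_pmf_subset[OF finite_all_edges E_edges])
  also have "map_pmf (\<lambda>f. card {e\<in>E. f e}) \<dots> = map_pmf (\<lambda>G. card {e\<in>E. G e}) (gnp n p)"
    by (simp add: map_pmf_comp) (intro map_pmf_cong refl arg_cong[where f = card], auto)
  finally show ?thesis by (simp only: degree_eq)
qed

lemma card_non_neighbours_ge:
  fixes c :: real
  assumes S: "S \<subseteq> {..<n}" and degree: "\<And>u. u < n \<Longrightarrow> real (card {v\<in>{..<n}. adj G u v}) \<le> c"
  shows "real (card {v\<in>{..<n}. \<forall>u\<in>S. \<not> adj G u v}) \<ge> real n - real (card S) * c"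
proof -
  define A where "A = {v\<in>{..<n}. \<forall>u\<in>S. \<not> adj G u v}"
  define B where "B = (\<Union>u\<in>S. {v\<in>{..<n}. adj G u v})"
  have "A \<union> B = {..<n}" "A \<inter> B = {}" unfolding A_def B_def by auto
  hence "card A + card B = n"
    by (metis card_Un_disjoint card_lessThan finite_Un finite_lessThan)
  have "finite S" using S finite_subset by blast
  hence "real (card B) \<le> (\<Sum>u\<in>S. real (card {v\<in>{..<n}. adj G u v}))"
    unfolding B_def of_nat_sum[symmetric] of_nat_le_iff by (rule card_UN_le)
  also have "\<dots> \<le> (\<Sum>u\<in>S. c)"
    using degree S by (intro sum_mono) auto
  also have "\<dots> = real (card S) * c" by simp
  finally show ?thesis
    using \<open>card A + card B = n\<close> unfolding A_def[symmetric] by linarith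
qed

lemma gnp_prob_degree_gt_twice_mean:
  fixes p \<mu> :: real
  assumes p: "p \<in> {0..1}" and mean: "real (n - 1) * p \<le> \<mu>" and "0 \<le> \<mu>"
  shows "measure_pmf.prob (gnp n p) {G. \<exists>u<n. 2 * \<mu> < real (card {v\<in>{..<n}. adj G u v})}
    \<le> real n * exp (- \<mu> / 3)"
proof -
  have "measure_pmf.prob (gnp n p) {G. \<exists>u<n. 2 * \<mu> < real (card {v\<in>{..<n}. adj G u v})}
      = measure_pmf.prob (gnp n p) (\<Union>u<n. {G. 2 * \<mu> < real (card {v\<in>{..<n}. adj G u v})})"
    by (rule arg_cong[where f = "measure_pmf.prob _"]) auto
  also have "\<dots> \<le> (\<Sum>u<n. measure_pmf.prob (gnp n p) {G. 2 * \<mu> < real (card {v\<in>{..<n}. adj G u v})})"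
    by (intro measure_pmf.finite_measure_subadditive_finite) auto
  also have "\<dots> = (\<Sum>u<n. measure_pmf.prob (map_pmf (\<lambda>G. card {v\<in>{..<n}. adj G u v}) (gnp n p))
      {j. 2 * \<mu> < real j})"
    by (simp add: measure_map_pmf vimage_def)
  also have "\<dots> = (\<Sum>u<n. measure_pmf.prob (binomial_pmf (n - 1) p) {j. 2 * \<mu> < real j})"
    by (intro sum.cong refl) (subst gnp_degree_distribution[OF _ p], auto)
  also have "\<dots> \<le> (\<Sum>u<n. exp (- \<mu> / 3))"
    by (intro sum_mono binomial_pmf_prob_gt_twice_mean[OF p mean \<open>0 \<le> \<mu>\<close>])
  finally show ?thesis by simp
qed

lemma gnp_prob_non_neighbours_ge:
  fixes p \<mu> s :: real
  assumes p: "p \<in> {0..1}" and mean: "real (n - 1) * p \<le> \<mu>" and "0 \<le> \<mu>"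
  shows "measure_pmf.prob (gnp n p)
      {G. \<forall>S \<subseteq> {..<n}. real (card S) \<le> s \<longrightarrow>
            real (card {v \<in> {..<n}. \<forall>u\<in>S. \<not> adj G u v}) \<ge> real n - 2 * s * \<mu>}
    \<ge> 1 - real n * exp (- \<mu> / 3)" (is "measure_pmf.prob _ ?Good \<ge> _")
proof -
  define Bad where "Bad = {G. \<exists>u<n. 2 * \<mu> < real (card {v\<in>{..<n}. adj G u v})}"
  have "- Bad \<subseteq> ?Good"
  proof safe
    fix G S assume "G \<notin> Bad" and S: "S \<subseteq> {..<n}" and card_S: "real (card S) \<le> s"
    have "real (card {v\<in>{..<n}. adj G u v}) \<le> 2 * \<mu>" if "u < n" for u
      using \<open>G \<notin> Bad\<close> that unfolding Bad_def by (metis (no_types, lifting) mem_Collect_eq not_less)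
    with S have "real n - real (card S) * (2 * \<mu>) \<le> real (card {v\<in>{..<n}. \<forall>u\<in>S. \<not> adj G u v})"
      by (rule card_non_neighbours_ge)
    moreover have "real (card S) * (2 * \<mu>) \<le> s * (2 * \<mu>)"
      using card_S \<open>0 \<le> \<mu>\<close> by (intro mult_right_mono) auto
    ultimately show "real n - 2 * s * \<mu> \<le> real (card {v\<in>{..<n}. \<forall>u\<in>S. \<not> adj G u v})"
      by linarith
  qed
  hence "measure_pmf.prob (gnp n p) (- Bad) \<le> measure_pmf.prob (gnp n p) ?Good"
    by (intro measure_pmf.finite_measure_mono) auto
  moreover have "measure_pmf.prob (gnp n p) Bad \<le> real n * exp (- \<mu> / 3)"
    unfolding Bad_def by (rule gnp_prob_degree_gt_twice_mean[OF p mean \<open>0 \<le> \<mu>\<close>])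
  ultimately show ?thesis
    using measure_pmf.prob_compl[of Bad "gnp n p"] by (simp add: Compl_eq_Diff_UNIV)
qed

theorem lemmaC3:
  fixes \<delta> \<rho> :: real
  assumes "0 < \<delta>" "\<delta> < 1" "0 < \<rho>" "\<rho> < (1 - \<delta>) / 2"
  shows "\<exists>N. \<forall>n\<ge>N.
    measure_pmf.prob (gnp n (real n powr (\<delta> - 1)))
      {G. \<forall>S \<subseteq> {..<n}. real (card S) \<le> real n powr \<rho> \<longrightarrow>
            real (card {v \<in> {..<n}. \<forall>u\<in>S. \<not> adj G u v})
              \<ge> real n - 2 * real n powr (\<delta> + \<rho>)}
    \<ge> 1 - exp (- (1/4) * real n powr \<delta>)"
proof -
  have "\<forall>\<^sub>F n in at_top. ln (real n) \<le> real n powr \<delta> / 12"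
    using \<open>0 < \<delta>\<close> by real_asymp
  then obtain N where N: "\<And>n. n \<ge> N \<Longrightarrow> ln (real n) \<le> real n powr \<delta> / 12"
    by (auto simp: eventually_at_top_linorder)
  show ?thesis
  proof (intro exI[of _ "max N 1"] allI impI)
    fix n :: nat assume "max N 1 \<le> n"
    hence "1 \<le> n" and ln_n: "ln (real n) \<le> real n powr \<delta> / 12" using N by auto
    define p where "p = real n powr (\<delta> - 1)"
    define \<mu> where "\<mu> = real n powr \<delta>"
    let ?Good = "{G. \<forall>S \<subseteq> {..<n}. real (card S) \<le> real n powr \<rho> \<longrightarrow>
      real (card {v \<in> {..<n}. \<forall>u\<in>S. \<not> adj G u v}) \<ge> real n - 2 * real n powr (\<delta> + \<rho>)}"
    have "p \<le> real n powr 0" unfolding p_def using \<open>1 \<le> n\<close> \<open>\<delta> < 1\<close> by (intro powr_mono) auto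
    hence p: "p \<in> {0..1}" unfolding p_def using \<open>1 \<le> n\<close> by auto
    have "real n * p = \<mu>" unfolding p_def \<mu>_def using \<open>1 \<le> n\<close> by (simp add: powr_mult_base)
    hence mean: "real (n - 1) * p \<le> \<mu>" using p \<open>1 \<le> n\<close> by (simp add: of_nat_diff algebra_simps)
    have "0 \<le> \<mu>" unfolding \<mu>_def by simp
    have "real n * exp (- \<mu> / 3) = exp (ln (real n) + - \<mu> / 3)"
      using \<open>1 \<le> n\<close> by (simp only: exp_add exp_ln of_nat_0_less_iff)
    also have "\<dots> \<le> exp (- (1/4) * \<mu>)"
      using ln_n unfolding \<mu>_def by simp
    finally have union_bound: "real n * exp (- \<mu> / 3) \<le> exp (- (1/4) * \<mu>)" .
    have scale: "2 * real n powr \<rho> * \<mu> = 2 * real n powr (\<delta> + \<rho>)"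
      unfolding \<mu>_def by (simp add: powr_add)
    have "1 - exp (- (1/4) * \<mu>) \<le> 1 - real n * exp (- \<mu> / 3)"
      using union_bound by simp
    also have "\<dots> \<le> measure_pmf.prob (gnp n p) ?Good"
      using gnp_prob_non_neighbours_ge[OF p mean \<open>0 \<le> \<mu>\<close>, of "real n powr \<rho>"] unfolding scale .
    finally show "measure_pmf.prob (gnp n (real n powr (\<delta> - 1))) ?Good \<ge> 1 - exp (- (1/4) * real n powr \<delta>)"
      unfolding p_def \<mu>_def .
  qed
qed
end
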